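(* Assume in addition that $\lambda_A>0$ (the dataset need not be balanced). Let $\alpha=\lambda_A/32$ and $M=32/\lambda_A^2$ (assumed to be an integer). Then the iterates of TD-SVRG (Algorithm 1) satisfy, for every $m\ge0$, $$\mathbb E\big[\|\tilde\theta_m-\theta^*\|^2\big]\le\left(\tfrac57\right)^m\|\tilde\theta_0-\theta^*\|^2.$$
   Context: Finite-sample setting. Let $\mathcal S$ be a finite state space, $\phi:\mathcal S\to\mathbb R^d$ a feature map with $\|\phi(s)\|_2\le 1$ for all $s$, $r:\mathcal S\times\mathcal S\to\mathbb R$ a reward function and $\gamma\in[0,1)$. For a pair of states $(s,s')$ and $\theta\in\mathbb R^d$ let $g_{s,s'}(\theta)=(r(s,s')+\gamma\phi(s')^T\theta-\phi(s)^T\theta)\phi(s)$. A dataset is a state trajectory $s_1,\dots,s_{N+1}$, giving the $N$ pairs $(s_t,s_{t+1})$, $t=1,\dots,N$. Let $A_d=\frac1N\sum_{t=1}^N\phi(s_t)(\phi(s_t)-\gamma\phi(s_{t+1}))^T$ and $b_d=\frac1N\sum_{t=1}^N r(s_t,s_{t+1})\phi(s_t)$, so that $\bar g(\theta):=\frac1N\sum_{t=1}^N g_{s_t,s_{t+1}}(\theta)=-A_d\theta+b_d$. Assume $A_d$ is nonsingular and let $\theta^*=A_d^{-1}b_d$. Let $\lambda_A$ denote the minimum eigenvalue of $(A_d+A_d^T)/2$. Algorithm 1 (TD-SVRG): given $\alpha>0$, an integer $M\ge1$ and an initial $\tilde\theta_0\in\mathbb R^d$, for epochs $m=1,2,\dots$: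 set $\tilde\theta=\tilde\theta_{m-1}$, compute $\bar g(\tilde\theta)$, set $\theta_0=\tilde\theta$; for $t=1,\dots,M$ draw an index $i_t$ uniformly from $\{1,\dots,N\}$, independently of everything else, put $(s,s')=(s_{i_t},s_{i_t+1})$, $v_t=g_{s,s'}(\theta_{t-1})-g_{s,s'}(\tilde\theta)+\bar g(\tilde\theta)$ and $\theta_t=\theta_{t-1}+\alpha v_t$; finally set $\tilde\theta_m=\theta_{t'}$ where $t'$ is drawn uniformly from $\{0,\dots,M-1\}$ independently of everything else. *)

theory Defs
  imports "HOL-Analysis.Analysis" "HOL-Probability.Probability"
begin

definition tdg :: "('s \<Rightarrow> 's \<Rightarrow> real) \<Rightarrow> real \<Rightarrow> ('s \<Rightarrow> real^'d) \<Rightarrow> 's \<Rightarrow> 's \<Rightarrow> real^'d \<Rightarrow> real^'d" where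
  "tdg r \<gamma> \<phi> s s' \<theta> = (r s s' + \<gamma> * (\<phi> s' \<bullet> \<theta>) - \<phi> s \<bullet> \<theta>) *\<^sub>R \<phi> s"

definition gbar :: "('s \<Rightarrow> 's \<Rightarrow> real) \<Rightarrow> real \<Rightarrow> ('s \<Rightarrow> real^'d) \<Rightarrow> (nat \<Rightarrow> 's) \<Rightarrow> nat \<Rightarrow> real^'d \<Rightarrow> real^'d" where
  "gbar r \<gamma> \<phi> traj N \<theta> = (1 / real N) *\<^sub>R (\<Sum>t=1..N. tdg r \<gamma> \<phi> (traj t) (traj (Suc t)) \<theta>)"

definition outer :: "real^'d \<Rightarrow> real^'d \<Rightarrow> real^'d^'d" where
  "outer u v = (\<chi> i j. u $ i * v $ j)"

definition A_d :: "real \<Rightarrow> ('s \<Rightarrow> real^'d) \<Rightarrow> (nat \<Rightarrow> 's) \<Rightarrow> nat \<Rightarrow> real^'d^'d" where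
  "A_d \<gamma> \<phi> traj N = (1 / real N) *\<^sub>R
     (\<Sum>t=1..N. outer (\<phi> (traj t)) (\<phi> (traj t) - \<gamma> *\<^sub>R \<phi> (traj (Suc t))))"

definition b_d :: "('s \<Rightarrow> 's \<Rightarrow> real) \<Rightarrow> ('s \<Rightarrow> real^'d) \<Rightarrow> (nat \<Rightarrow> 's) \<Rightarrow> nat \<Rightarrow> real^'d" where
  "b_d r \<phi> traj N = (1 / real N) *\<^sub>R (\<Sum>t=1..N. r (traj t) (traj (Suc t)) *\<^sub>R \<phi> (traj t))"

definition min_eig :: "real^'d^'d \<Rightarrow> real" where
  "min_eig S = Min {c. \<exists>v. v \<noteq> 0 \<and> S *v v = c *\<^sub>R v}"

definition svrg_step :: "('s \<Rightarrow> 's \<Rightarrow> real) \<Rightarrow> real \<Rightarrow> ('s \<Rightarrow> real^'d) \<Rightarrow> (nat \<Rightarrow> 's) \<Rightarrow> nat \<Rightarrow> real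
     \<Rightarrow> real^'d \<Rightarrow> real^'d \<Rightarrow> nat \<Rightarrow> real^'d" where
  "svrg_step r \<gamma> \<phi> traj N \<alpha> \<theta>t \<theta> i =
     \<theta> + \<alpha> *\<^sub>R (tdg r \<gamma> \<phi> (traj i) (traj (Suc i)) \<theta> - tdg r \<gamma> \<phi> (traj i) (traj (Suc i)) \<theta>t
                 + gbar r \<gamma> \<phi> traj N \<theta>t)"

primrec inner_dist :: "('s \<Rightarrow> 's \<Rightarrow> real) \<Rightarrow> real \<Rightarrow> ('s \<Rightarrow> real^'d) \<Rightarrow> (nat \<Rightarrow> 's) \<Rightarrow> nat \<Rightarrow> real
     \<Rightarrow> real^'d \<Rightarrow> nat \<Rightarrow> (real^'d) pmf" where
  "inner_dist r \<gamma> \<phi> traj N \<alpha> \<theta>t 0 = return_pmf \<theta>t"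
| "inner_dist r \<gamma> \<phi> traj N \<alpha> \<theta>t (Suc t) =
     bind_pmf (inner_dist r \<gamma> \<phi> traj N \<alpha> \<theta>t t) (\<lambda>\<theta>.
     bind_pmf (pmf_of_set {1..N}) (\<lambda>i. return_pmf (svrg_step r \<gamma> \<phi> traj N \<alpha> \<theta>t \<theta> i)))"

definition epoch :: "('s \<Rightarrow> 's \<Rightarrow> real) \<Rightarrow> real \<Rightarrow> ('s \<Rightarrow> real^'d) \<Rightarrow> (nat \<Rightarrow> 's) \<Rightarrow> nat \<Rightarrow> real \<Rightarrow> nat
     \<Rightarrow> real^'d \<Rightarrow> (real^'d) pmf" where
  "epoch r \<gamma> \<phi> traj N \<alpha> M \<theta>t =
     bind_pmf (pmf_of_set {0..<M}) (\<lambda>t'. inner_dist r \<gamma> \<phi> traj N \<alpha> \<theta>t t')"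

primrec td_svrg :: "('s \<Rightarrow> 's \<Rightarrow> real) \<Rightarrow> real \<Rightarrow> ('s \<Rightarrow> real^'d) \<Rightarrow> (nat \<Rightarrow> 's) \<Rightarrow> nat \<Rightarrow> real \<Rightarrow> nat
     \<Rightarrow> real^'d \<Rightarrow> nat \<Rightarrow> (real^'d) pmf" where
  "td_svrg r \<gamma> \<phi> traj N \<alpha> M \<theta>0 0 = return_pmf \<theta>0"
| "td_svrg r \<gamma> \<phi> traj N \<alpha> M \<theta>0 (Suc m) =
     bind_pmf (td_svrg r \<gamma> \<phi> traj N \<alpha> M \<theta>0 m) (epoch r \<gamma> \<phi> traj N \<alpha> M)"

end

theory Submission
  imports Defs
begin

text \<open>
  Let \<lambda> be the minimum eigenvalue of the symmetric part of A_d, so that x \<bullet> A_d x \<ge> \<lambda> |x|^2,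
  and note |A_d x| \<le> 2 |x| because the features have norm at most 1. Measured from \<theta>*, the
  variance-reduced direction has mean -A_d (\<theta> - \<theta>*) and a fluctuation whose second moment is
  at most 4 |\<theta> - \<theta>'|^2, where \<theta>' is the anchor of the epoch. With \<alpha> = \<lambda>/32 one inner step
  therefore contracts the mean squared error as e(t+1) \<le> (1 - c) e(t) + (2/13) c e(0), where
  c = 13 \<lambda>^2/256. Hence e(t) \<le> (2/13 + (11/13) (1 - c)^t) e(0), and averaging over the uniformly
  drawn output index, using c M = 13/8, gives the epoch factor 2/13 + (11/13)(8/13) = 114/169 \<le> 5/7.
\<close>

section \<open>Expectations under finitely supported distributions\<close>

lemma expectation_pmf_of_set:
  fixes f :: "'i \<Rightarrow> 'a::{banach, second_countable_topology}"
  assumes "finite I" "I \<noteq> {}"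
  shows "measure_pmf.expectation (pmf_of_set I) f = (1 / real (card I)) *\<^sub>R (\<Sum>i\<in>I. f i)"
  using assms by (subst integral_measure_pmf[of I]) (auto simp: scaleR_sum_right)

lemma expectation_bind_pmf_finite:
  fixes h :: "'b \<Rightarrow> real"
  assumes "finite (set_pmf p)" "\<And>x. x \<in> set_pmf p \<Longrightarrow> finite (set_pmf (f x))"
  shows "measure_pmf.expectation (bind_pmf p f) h
           = measure_pmf.expectation p (\<lambda>x. measure_pmf.expectation (f x) h)"
  using assms
  by (subst pmf_expectation_bind[of "set_pmf p"], simp_all, subst integral_measure_pmf[of "set_pmf p"]) auto

lemma expectation_mono_finite_pmf:
  fixes f g :: "'a \<Rightarrow> real"
  assumes "finite (set_pmf p)" "\<And>x. x \<in> set_pmf p \<Longrightarrow> f x \<le> g x"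
  shows "measure_pmf.expectation p f \<le> measure_pmf.expectation p g"
  using assms by (intro integral_mono_AE) (auto simp: integrable_measure_pmf_finite AE_measure_pmf_iff)

lemma expectation_norm_sq_noisy_step:
  fixes X :: "'i \<Rightarrow> 'a::{real_inner, banach, second_countable_topology}"
  assumes fin: "finite (set_pmf p)"
  defines "m \<equiv> measure_pmf.expectation p X"
  shows "measure_pmf.expectation p (\<lambda>i. (norm (e - \<alpha> *\<^sub>R (X i + c)))\<^sup>2)
       = (norm e)\<^sup>2 - 2 * \<alpha> * (e \<bullet> (m + c))
         + \<alpha>\<^sup>2 * (measure_pmf.expectation p (\<lambda>i. (norm (X i))\<^sup>2) - (norm m)\<^sup>2 + (norm (m + c))\<^sup>2)"
proof -
  have "(norm (e - \<alpha> *\<^sub>R (X i + c)))\<^sup>2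
      = (norm e)\<^sup>2 - 2 * \<alpha> * (e \<bullet> X i) - 2 * \<alpha> * (e \<bullet> c)
        + \<alpha>\<^sup>2 * ((norm (X i))\<^sup>2 + 2 * (X i \<bullet> c) + (norm c)\<^sup>2)" for i
    unfolding power2_norm_eq_inner
    by (simp add: inner_diff_left inner_diff_right inner_add_left inner_add_right inner_commute
        ring_distribs power2_eq_square)
  moreover have "(norm (m + c))\<^sup>2 = (norm m)\<^sup>2 + 2 * (m \<bullet> c) + (norm c)\<^sup>2"
    unfolding power2_norm_eq_inner by (simp add: inner_add_left inner_add_right inner_commute)
  ultimately show ?thesis
    using fin by (simp add: integrable_measure_pmf_finite m_def inner_add_right ring_distribs)
qed

section \<open>The TD operator\<close>

lemma outer_mult_vec: "outer u v *v x = (v \<bullet> x) *\<^sub>R (u::real^'d)"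
  by (simp add: vec_eq_iff outer_def matrix_vector_mult_def inner_vec_def sum_distrib_left mult_ac)

lemma sum_matrix_vector_mult: "finite I \<Longrightarrow> (\<Sum>i\<in>I. B i) *v x = (\<Sum>i\<in>I. B i *v (x::real^'n))"
  by (induction I rule: finite_induct) (simp_all add: matrix_vector_mult_add_rdistrib)

lemma A_d_mult_vec:
  "A_d \<gamma> \<phi> traj N *v x
     = (1 / real N) *\<^sub>R (\<Sum>t=1..N. ((\<phi> (traj t) - \<gamma> *\<^sub>R \<phi> (traj (Suc t))) \<bullet> x) *\<^sub>R \<phi> (traj t))"
  unfolding A_d_def scaleR_matrix_vector_assoc[symmetric]
  by (simp add: sum_matrix_vector_mult outer_mult_vec)

lemma A_d_mult_vec_expectation:
  assumes "N \<ge> 1"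
  shows "A_d \<gamma> \<phi> traj N *v x = measure_pmf.expectation (pmf_of_set {1..N})
           (\<lambda>t. ((\<phi> (traj t) - \<gamma> *\<^sub>R \<phi> (traj (Suc t))) \<bullet> x) *\<^sub>R \<phi> (traj t))"
  using assms by (simp add: A_d_mult_vec expectation_pmf_of_set)

lemma gbar_eq_b_d_minus_A_d: "gbar r \<gamma> \<phi> traj N \<theta> = b_d r \<phi> traj N - A_d \<gamma> \<phi> traj N *v \<theta>"
proof -
  have "tdg r \<gamma> \<phi> (traj t) (traj (Suc t)) \<theta> = r (traj t) (traj (Suc t)) *\<^sub>R \<phi> (traj t)
          - ((\<phi> (traj t) - \<gamma> *\<^sub>R \<phi> (traj (Suc t))) \<bullet> \<theta>) *\<^sub>R \<phi> (traj t)" for t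
    by (simp add: tdg_def inner_diff_left algebra_simps)
  then show ?thesis
    unfolding gbar_def b_d_def A_d_mult_vec by (simp add: sum_subtractf scaleR_diff_right)
qed

lemma tdg_diff:
  "tdg r \<gamma> \<phi> s s' \<theta> - tdg r \<gamma> \<phi> s s' \<theta>' = - (((\<phi> s - \<gamma> *\<^sub>R \<phi> s') \<bullet> (\<theta> - \<theta>')) *\<^sub>R \<phi> s)"
  by (simp add: tdg_def inner_diff_left inner_diff_right algebra_simps)

lemma svrg_step_error:
  assumes "A_d \<gamma> \<phi> traj N *v \<theta>s = b_d r \<phi> traj N"
  shows "svrg_step r \<gamma> \<phi> traj N \<alpha> \<theta>t \<theta> i - \<theta>s
    = (\<theta> - \<theta>s) - \<alpha> *\<^sub>R (((\<phi> (traj i) - \<gamma> *\<^sub>R \<phi> (traj (Suc i))) \<bullet> (\<theta> - \<theta>t)) *\<^sub>R \<phi> (traj i)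
                       + A_d \<gamma> \<phi> traj N *v (\<theta>t - \<theta>s))"
  unfolding svrg_step_def tdg_diff gbar_eq_b_d_minus_A_d assms[symmetric]
  by (simp add: algebra_simps)

lemma invertible_mult_matrix_inv: "invertible (A::real^'d^'d) \<Longrightarrow> A ** matrix_inv A = mat 1"
  unfolding invertible_def matrix_inv_def by (rule someI_ex[THEN conjunct1])

section \<open>Minimum eigenvalue and the Rayleigh quotient\<close>

lemma inner_symmetric_part_mult_vec:
  "x \<bullet> (((1/2) *\<^sub>R (A + transpose A)) *v x) = x \<bullet> ((A::real^'d^'d) *v x)"
proof -
  have "x \<bullet> (transpose A *v x) = x \<bullet> (A *v x)"
    by (simp add: dot_lmul_matrix[symmetric] inner_commute)
  then show ?thesis
    by (simp add: scaleR_matrix_vector_assoc[symmetric] matrix_vector_mult_add_rdistrib inner_add_right)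
qed

lemma symmetric_matrix_inner_swap:
  assumes "transpose S = S"
  shows "x \<bullet> ((S::real^'d^'d) *v y) = y \<bullet> (S *v x)"
  by (metis assms dot_lmul_matrix inner_commute vector_transpose_matrix)

lemma finite_eigenvalues_symmetric:
  assumes sym: "transpose S = S"
  shows "finite {c. \<exists>v. v \<noteq> 0 \<and> (S::real^'d^'d) *v v = c *\<^sub>R v}" (is "finite ?E")
proof -
  define w where "w c = (SOME v. v \<noteq> 0 \<and> S *v v = c *\<^sub>R v)" for c
  have w: "w c \<noteq> 0 \<and> S *v w c = c *\<^sub>R w c" if "c \<in> ?E" for c
    using that unfolding w_def mem_Collect_eq by (rule someI_ex)
  have inj: "inj_on w ?E"
  proof (rule inj_onI)
    fix c1 c2 assume c: "c1 \<in> ?E" "c2 \<in> ?E" "w c1 = w c2"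
    then have "c1 *\<^sub>R w c1 = c2 *\<^sub>R w c1" using w[OF c(1)] w[OF c(2)] by metis
    then show "c1 = c2" using w[OF c(1)] by (simp add: scaleR_cancel_right)
  qed
  have "orthogonal (w c1) (w c2)" if "c1 \<in> ?E" "c2 \<in> ?E" "c1 \<noteq> c2" for c1 c2
  proof -
    have "c2 * (w c1 \<bullet> w c2) = c1 * (w c1 \<bullet> w c2)"
      using symmetric_matrix_inner_swap[OF sym, of "w c1" "w c2"] w[OF that(1)] w[OF that(2)]
      by (simp add: inner_commute)
    then show ?thesis using that by (simp add: orthogonal_def)
  qed
  then have "pairwise orthogonal (w ` ?E)"
    by (auto simp: pairwise_def)
  moreover have "0 \<notin> w ` ?E" using w by force
  ultimately have "independent (w ` ?E)" using pairwise_orthogonal_independent by blast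
  then have "finite (w ` ?E)" using independent_bound by blast
  then show ?thesis using finite_imageD inj by blast
qed

lemma real_linear_plus_quadratic_nonneg_imp_zero:
  fixes a b :: real
  assumes "\<And>t. 0 \<le> a * t + b * t\<^sup>2"
  shows "a = 0"
proof -
  define d where "d = \<bar>b\<bar> + 1"
  have d: "d > 0" "b \<le> d - 1" by (auto simp: d_def)
  have "0 \<le> a * (- a / d) + b * (- a / d)\<^sup>2" by (rule assms)
  also have "\<dots> = a\<^sup>2 * (b - d) / d\<^sup>2" using d by (simp add: field_simps power2_eq_square)
  also have "\<dots> \<le> (a\<^sup>2 * (- 1)) / d\<^sup>2"
    using d by (intro divide_right_mono mult_left_mono) auto
  also have "\<dots> = - (a\<^sup>2 / d\<^sup>2)" by simp
  finally have "a\<^sup>2 / d\<^sup>2 \<le> 0" by simp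
  then show ?thesis using d by (simp add: divide_le_0_iff)
qed

lemma psd_symmetric_form_zero_imp_kernel:
  fixes B :: "real^'d^'d"
  assumes sym: "transpose B = B" and psd: "\<And>x. 0 \<le> x \<bullet> (B *v x)" and zero: "x0 \<bullet> (B *v x0) = 0"
  shows "B *v x0 = 0"
proof -
  define z where "z = B *v x0"
  have "0 \<le> 2 * (z \<bullet> z) * t + (z \<bullet> (B *v z)) * t\<^sup>2" for t
  proof -
    have "(x0 + t *\<^sub>R z) \<bullet> (B *v (x0 + t *\<^sub>R z))
        = x0 \<bullet> (B *v x0) + t * (x0 \<bullet> (B *v z)) + t * (z \<bullet> (B *v x0)) + t\<^sup>2 * (z \<bullet> (B *v z))"
      by (simp add: matrix_vector_right_distrib matrix_vector_mult_scaleR inner_add_left inner_add_right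
          ring_distribs power2_eq_square)
    also have "\<dots> = 2 * (z \<bullet> z) * t + (z \<bullet> (B *v z)) * t\<^sup>2"
      using zero symmetric_matrix_inner_swap[OF sym, of x0 z] unfolding z_def[symmetric] by simp
    finally show ?thesis using psd by metis
  qed
  then have "2 * (z \<bullet> z) = 0" by (rule real_linear_plus_quadratic_nonneg_imp_zero)
  then show ?thesis by (simp add: z_def)
qed

lemma rayleigh_quotient_attains_min:
  "\<exists>x0. norm x0 = 1 \<and> (\<forall>x. (x0 \<bullet> (S *v x0)) * (norm x)\<^sup>2 \<le> x \<bullet> ((S::real^'d^'d) *v x))"
proof -
  define f where "f x = x \<bullet> (S *v x)" for x
  have "continuous_on (sphere 0 1) f" unfolding f_def
    by (intro continuous_intros linear_continuous_on matrix_vector_mul_bounded_linear)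
  moreover have "sphere (0::real^'d) 1 \<noteq> {}"
  proof -
    obtain i :: 'd where True by blast
    have "axis i 1 \<in> sphere (0::real^'d) 1" by simp
    then show ?thesis by blast
  qed
  ultimately obtain x0 where x0: "norm x0 = 1" "\<And>y. norm y = 1 \<Longrightarrow> f x0 \<le> f y"
    using continuous_attains_inf[OF compact_sphere] by (metis mem_sphere_0)
  have "f x0 * (norm x)\<^sup>2 \<le> f x" for x
  proof (cases "x = 0")
    case False
    have "f x0 \<le> f (x /\<^sub>R norm x)" using x0(2) False by simp
    also have "\<dots> = f x / (norm x)\<^sup>2"
      by (simp add: f_def matrix_vector_mult_scaleR power2_eq_square divide_inverse
          inverse_mult_distrib mult_ac)
    finally show ?thesis using False by (simp add: field_simps)
  qed (simp add: f_def)
  then show ?thesis using x0(1) unfolding f_def by blast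
qed

text \<open>
  Since min_eig is a Min over a set of reals, it says something only once that set is known to be
  finite and to contain the minimum of the Rayleigh quotient.
\<close>

lemma min_eig_mult_norm_le_quadratic_form:
  fixes S :: "real^'d^'d"
  assumes sym: "transpose S = S"
  shows "min_eig S * (norm x)\<^sup>2 \<le> x \<bullet> (S *v x)"
proof -
  obtain x0 where x0: "norm x0 = 1" and min: "\<And>x. (x0 \<bullet> (S *v x0)) * (norm x)\<^sup>2 \<le> x \<bullet> (S *v x)"
    using rayleigh_quotient_attains_min by blast
  define \<mu> where "\<mu> = x0 \<bullet> (S *v x0)"
  define B where "B = S - \<mu> *\<^sub>R mat 1"
  have Bx: "x \<bullet> (B *v x) = x \<bullet> (S *v x) - \<mu> * (norm x)\<^sup>2" for x
    by (simp add: B_def matrix_vector_mult_diff_rdistrib scaleR_matrix_vector_assoc[symmetric]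
        inner_diff_right power2_norm_eq_inner)
  have "transpose B = transpose S - \<mu> *\<^sub>R transpose (mat 1)"
    by (simp add: B_def vec_eq_iff transpose_def)
  then have "transpose B = B" by (simp add: sym B_def)
  moreover have "0 \<le> x \<bullet> (B *v x)" for x using min[of x] by (simp add: Bx \<mu>_def)
  moreover have "x0 \<bullet> (B *v x0) = 0" using x0 by (simp add: Bx \<mu>_def)
  ultimately have "B *v x0 = 0" by (rule psd_symmetric_form_zero_imp_kernel)
  then have "S *v x0 = \<mu> *\<^sub>R x0"
    by (simp add: B_def matrix_vector_mult_diff_rdistrib scaleR_matrix_vector_assoc[symmetric])
  moreover have "x0 \<noteq> 0" using x0 by auto
  ultimately have "min_eig S \<le> \<mu>"
    unfolding min_eig_def by (intro Min_le finite_eigenvalues_symmetric[OF sym]) blast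
  then have "min_eig S * (norm x)\<^sup>2 \<le> \<mu> * (norm x)\<^sup>2" by (simp add: mult_right_mono)
  then show ?thesis using min[of x] unfolding \<mu>_def by linarith
qed

lemma min_eig_symmetric_part_le:
  fixes A :: "real^'d^'d"
  shows "min_eig ((1/2) *\<^sub>R (A + transpose A)) * (norm x)\<^sup>2 \<le> x \<bullet> (A *v x)"
proof -
  have "transpose ((1/2) *\<^sub>R (A + transpose A)) = (1/2) *\<^sub>R (A + transpose A)"
    by (simp add: vec_eq_iff transpose_def)
  from min_eig_mult_norm_le_quadratic_form[OF this] show ?thesis
    by (simp only: inner_symmetric_part_mult_vec)
qed

section \<open>One inner step\<close>

lemma norm_diff_sq_le: "(norm (x - y))\<^sup>2 \<le> 2 * (norm x)\<^sup>2 + 2 * (norm (y::'a::real_normed_vector))\<^sup>2"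
proof -
  have "(norm (x - y))\<^sup>2 \<le> (norm x + norm y)\<^sup>2"
    using norm_triangle_ineq4[of x y] by (intro power_mono) auto
  also have "\<dots> \<le> 2 * (norm x)\<^sup>2 + 2 * (norm y)\<^sup>2"
    using sum_squares_bound[of "norm x" "norm y"] by (simp add: power2_sum)
  finally show ?thesis .
qed

lemma norm_td_feature_le:
  assumes "\<And>s. norm (\<phi> s) \<le> 1" "0 \<le> \<gamma>" "\<gamma> \<le> 1"
  shows "norm (\<phi> s - \<gamma> *\<^sub>R \<phi> s') \<le> 2"
proof -
  have "norm (\<phi> s - \<gamma> *\<^sub>R \<phi> s') \<le> norm (\<phi> s) + \<gamma> * norm (\<phi> s')"
    using norm_triangle_ineq4[of "\<phi> s" "\<gamma> *\<^sub>R \<phi> s'"] assms(2) by simp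
  also have "\<dots> \<le> 1 + 1 * 1" using assms by (intro add_mono mult_mono) auto
  finally show ?thesis by simp
qed

lemma norm_inner_scaleR_le:
  assumes "norm p \<le> 1" "norm q \<le> 2"
  shows "norm ((q \<bullet> x) *\<^sub>R p) \<le> 2 * norm x"
proof -
  have "norm ((q \<bullet> x) *\<^sub>R p) \<le> \<bar>q \<bullet> x\<bar>" using assms(1) by (simp add: mult_left_le)
  also have "\<dots> \<le> norm q * norm x" by (simp add: Cauchy_Schwarz_ineq2)
  also have "\<dots> \<le> 2 * norm x" using assms(2) by (simp add: mult_right_mono)
  finally show ?thesis .
qed

lemma norm_A_d_mult_vec_le:
  assumes "\<And>s. norm (\<phi> s) \<le> 1" "0 \<le> \<gamma>" "\<gamma> \<le> 1" "N \<ge> 1"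
  shows "norm (A_d \<gamma> \<phi> traj N *v x) \<le> 2 * norm x"
proof -
  let ?P = "pmf_of_set {1..N}"
  have "norm (A_d \<gamma> \<phi> traj N *v x)
      \<le> measure_pmf.expectation ?P (\<lambda>t. norm (((\<phi> (traj t) - \<gamma> *\<^sub>R \<phi> (traj (Suc t))) \<bullet> x) *\<^sub>R \<phi> (traj t)))"
    unfolding A_d_mult_vec_expectation[OF assms(4)] by (rule integral_norm_bound)
  also have "\<dots> \<le> measure_pmf.expectation ?P (\<lambda>t. 2 * norm x)"
    using assms by (intro expectation_mono_finite_pmf norm_inner_scaleR_le norm_td_feature_le) auto
  finally show ?thesis by simp
qed

lemma svrg_step_mean_sq_error:
  assumes phi: "\<And>s. norm (\<phi> s) \<le> 1" and gamma: "0 \<le> \<gamma>" "\<gamma> \<le> 1" and N: "N \<ge> 1"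
    and fixed: "A_d \<gamma> \<phi> traj N *v \<theta>s = b_d r \<phi> traj N"
    and coercive: "\<And>x. L * (norm x)\<^sup>2 \<le> x \<bullet> (A_d \<gamma> \<phi> traj N *v x)"
    and \<alpha>: "0 \<le> \<alpha>"
  shows "measure_pmf.expectation (pmf_of_set {1..N}) (\<lambda>i. (norm (svrg_step r \<gamma> \<phi> traj N \<alpha> \<theta>t \<theta> i - \<theta>s))\<^sup>2)
    \<le> (1 - 2 * \<alpha> * L + 12 * \<alpha>\<^sup>2) * (norm (\<theta> - \<theta>s))\<^sup>2 + 8 * \<alpha>\<^sup>2 * (norm (\<theta>t - \<theta>s))\<^sup>2"
proof -
  let ?P = "pmf_of_set {1..N}" and ?A = "A_d \<gamma> \<phi> traj N"
  define e f where "e = \<theta> - \<theta>s" and "f = \<theta>t - \<theta>s"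
  define X where "X i = ((\<phi> (traj i) - \<gamma> *\<^sub>R \<phi> (traj (Suc i))) \<bullet> (e - f)) *\<^sub>R \<phi> (traj i)" for i
  have fin: "finite (set_pmf ?P)" using N by simp
  have mean: "measure_pmf.expectation ?P X = ?A *v (e - f)"
    unfolding X_def A_d_mult_vec_expectation[OF N] ..
  have X_le: "norm (X i) \<le> 2 * norm (e - f)" for i
    unfolding X_def using phi gamma by (intro norm_inner_scaleR_le norm_td_feature_le) auto
  have "measure_pmf.expectation ?P (\<lambda>i. (norm (X i))\<^sup>2) \<le> measure_pmf.expectation ?P (\<lambda>i. (2 * norm (e - f))\<^sup>2)"
    using X_le by (intro expectation_mono_finite_pmf[OF fin] power_mono) auto
  also have "\<dots> \<le> 8 * (norm e)\<^sup>2 + 8 * (norm f)\<^sup>2"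
    using norm_diff_sq_le[of e f] by (simp add: power_mult_distrib)
  finally have var: "measure_pmf.expectation ?P (\<lambda>i. (norm (X i))\<^sup>2) \<le> 8 * (norm e)\<^sup>2 + 8 * (norm f)\<^sup>2" .
  have "(norm (?A *v e))\<^sup>2 \<le> (2 * norm e)\<^sup>2"
    using norm_A_d_mult_vec_le[OF phi gamma N] by (intro power_mono) auto
  then have "(norm (?A *v e))\<^sup>2 \<le> 4 * (norm e)\<^sup>2" by (simp add: power_mult_distrib)
  with var have noise: "measure_pmf.expectation ?P (\<lambda>i. (norm (X i))\<^sup>2) - (norm (?A *v (e - f)))\<^sup>2
      + (norm (?A *v e))\<^sup>2 \<le> 12 * (norm e)\<^sup>2 + 8 * (norm f)\<^sup>2"
    using zero_le_power2[of "norm (?A *v (e - f))"] by linarith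
  have "measure_pmf.expectation ?P (\<lambda>i. (norm (svrg_step r \<gamma> \<phi> traj N \<alpha> \<theta>t \<theta> i - \<theta>s))\<^sup>2)
      = measure_pmf.expectation ?P (\<lambda>i. (norm (e - \<alpha> *\<^sub>R (X i + ?A *v f)))\<^sup>2)"
    unfolding svrg_step_error[OF fixed] X_def e_def f_def by simp
  also have "\<dots> = (norm e)\<^sup>2 - 2 * \<alpha> * (e \<bullet> (?A *v e))
      + \<alpha>\<^sup>2 * (measure_pmf.expectation ?P (\<lambda>i. (norm (X i))\<^sup>2) - (norm (?A *v (e - f)))\<^sup>2 + (norm (?A *v e))\<^sup>2)"
    unfolding expectation_norm_sq_noisy_step[OF fin] mean by (simp add: matrix_vector_mult_diff_distrib)
  also have "\<dots> \<le> (norm e)\<^sup>2 - 2 * \<alpha> * (L * (norm e)\<^sup>2) + \<alpha>\<^sup>2 * (12 * (norm e)\<^sup>2 + 8 * (norm f)\<^sup>2)"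
  proof -
    have "2 * \<alpha> * (L * (norm e)\<^sup>2) \<le> 2 * \<alpha> * (e \<bullet> (?A *v e))"
      using coercive[of e] \<alpha> by (simp add: mult_left_mono)
    moreover have "\<alpha>\<^sup>2 * (measure_pmf.expectation ?P (\<lambda>i. (norm (X i))\<^sup>2) - (norm (?A *v (e - f)))\<^sup>2
        + (norm (?A *v e))\<^sup>2) \<le> \<alpha>\<^sup>2 * (12 * (norm e)\<^sup>2 + 8 * (norm f)\<^sup>2)"
      using noise by (simp add: mult_left_mono)
    ultimately show ?thesis by linarith
  qed
  finally show ?thesis unfolding e_def f_def by (simp add: algebra_simps)
qed

section \<open>Inner loop, epoch and outer loop\<close>

lemma finite_set_pmf_inner_dist: "N \<ge> 1 \<Longrightarrow> finite (set_pmf (inner_dist r \<gamma> \<phi> traj N \<alpha> \<theta>t t))"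
  by (induction t) auto

lemma finite_set_pmf_epoch: "N \<ge> 1 \<Longrightarrow> M \<ge> 1 \<Longrightarrow> finite (set_pmf (epoch r \<gamma> \<phi> traj N \<alpha> M \<theta>t))"
  unfolding epoch_def using finite_set_pmf_inner_dist by auto

lemma finite_set_pmf_td_svrg: "N \<ge> 1 \<Longrightarrow> M \<ge> 1 \<Longrightarrow> finite (set_pmf (td_svrg r \<gamma> \<phi> traj N \<alpha> M \<theta>0 m))"
  by (induction m) (auto simp: finite_set_pmf_epoch)

lemma inner_dist_expectation_le:
  fixes F :: "real^'d \<Rightarrow> real"
  assumes N: "N \<ge> 1" and c: "c \<le> 1"
    and step: "\<And>\<theta>. measure_pmf.expectation (pmf_of_set {1..N}) (\<lambda>i. F (svrg_step r \<gamma> \<phi> traj N \<alpha> \<theta>t \<theta> i))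
                  \<le> (1 - c) * F \<theta> + c * \<kappa> * F \<theta>t"
  shows "measure_pmf.expectation (inner_dist r \<gamma> \<phi> traj N \<alpha> \<theta>t t) F
           \<le> \<kappa> * F \<theta>t + (1 - \<kappa>) * (1 - c) ^ t * F \<theta>t"
proof (induction t)
  case 0
  then show ?case by (simp add: algebra_simps)
next
  case (Suc t)
  let ?D = "inner_dist r \<gamma> \<phi> traj N \<alpha> \<theta>t t"
  have fin: "finite (set_pmf ?D)" using finite_set_pmf_inner_dist[OF N] .
  have "measure_pmf.expectation (inner_dist r \<gamma> \<phi> traj N \<alpha> \<theta>t (Suc t)) F
      = measure_pmf.expectation ?D
          (\<lambda>\<theta>. measure_pmf.expectation (pmf_of_set {1..N}) (\<lambda>i. F (svrg_step r \<gamma> \<phi> traj N \<alpha> \<theta>t \<theta> i)))"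
    using N fin by (simp add: expectation_bind_pmf_finite)
  also have "\<dots> \<le> measure_pmf.expectation ?D (\<lambda>\<theta>. (1 - c) * F \<theta> + c * \<kappa> * F \<theta>t)"
    by (rule expectation_mono_finite_pmf[OF fin step])
  also have "\<dots> = (1 - c) * measure_pmf.expectation ?D F + c * \<kappa> * F \<theta>t"
    using fin by (simp add: integrable_measure_pmf_finite)
  also have "\<dots> \<le> (1 - c) * (\<kappa> * F \<theta>t + (1 - \<kappa>) * (1 - c) ^ t * F \<theta>t) + c * \<kappa> * F \<theta>t"
    using Suc.IH c by (simp add: mult_left_mono)
  also have "\<dots> = \<kappa> * F \<theta>t + (1 - \<kappa>) * (1 - c) ^ Suc t * F \<theta>t"
    by (simp add: algebra_simps)
  finally show ?case .
qed

lemma epoch_expectation_le: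
  fixes F :: "real^'d \<Rightarrow> real"
  assumes N: "N \<ge> 1" and M: "M \<ge> 1" and c: "0 < c" "c \<le> 1" and \<kappa>: "\<kappa> \<le> 1" and F: "0 \<le> F \<theta>t"
    and step: "\<And>\<theta>. measure_pmf.expectation (pmf_of_set {1..N}) (\<lambda>i. F (svrg_step r \<gamma> \<phi> traj N \<alpha> \<theta>t \<theta> i))
                  \<le> (1 - c) * F \<theta> + c * \<kappa> * F \<theta>t"
  shows "measure_pmf.expectation (epoch r \<gamma> \<phi> traj N \<alpha> M \<theta>t) F \<le> (\<kappa> + (1 - \<kappa>) / (c * M)) * F \<theta>t"
proof -
  have geom: "(\<Sum>t<M. (1 - c) ^ t) \<le> 1 / c"
  proof -
    have "(\<Sum>t<M. (1 - c) ^ t) = (1 - (1 - c) ^ M) / c" using c by (simp add: sum_gp_strict)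
    also have "\<dots> \<le> 1 / c" using c by (simp add: divide_right_mono)
    finally show ?thesis .
  qed
  have "measure_pmf.expectation (epoch r \<gamma> \<phi> traj N \<alpha> M \<theta>t) F
      = (\<Sum>t<M. measure_pmf.expectation (inner_dist r \<gamma> \<phi> traj N \<alpha> \<theta>t t) F) / M"
  proof -
    have "{0..<M} \<noteq> {}" using M by simp
    then show ?thesis
      unfolding epoch_def using N
      by (subst expectation_bind_pmf_finite)
         (simp_all add: finite_set_pmf_inner_dist integral_pmf_of_set atLeast0LessThan)
  qed
  also have "\<dots> \<le> (\<Sum>t<M. \<kappa> * F \<theta>t + (1 - \<kappa>) * F \<theta>t * (1 - c) ^ t) / M"
    using inner_dist_expectation_le[OF N c(2) step]
    by (intro divide_right_mono sum_mono) (simp_all add: mult_ac)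
  also have "\<dots> = \<kappa> * F \<theta>t + (1 - \<kappa>) * F \<theta>t * (\<Sum>t<M. (1 - c) ^ t) / M"
    using M by (simp add: sum.distrib sum_distrib_left add_divide_distrib)
  also have "\<dots> \<le> \<kappa> * F \<theta>t + (1 - \<kappa>) * F \<theta>t * (1 / c) / M"
    using geom \<kappa> F by (intro add_left_mono divide_right_mono mult_left_mono) auto
  also have "\<dots> = (\<kappa> + (1 - \<kappa>) / (c * M)) * F \<theta>t"
    by (simp add: field_simps)
  finally show ?thesis .
qed

lemma td_svrg_expectation_le:
  fixes F :: "real^'d \<Rightarrow> real"
  assumes N: "N \<ge> 1" and M: "M \<ge> 1" and \<rho>: "0 \<le> \<rho>"
    and epoch: "\<And>\<theta>t. measure_pmf.expectation (epoch r \<gamma> \<phi> traj N \<alpha> M \<theta>t) F \<le> \<rho> * F \<theta>t"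
  shows "measure_pmf.expectation (td_svrg r \<gamma> \<phi> traj N \<alpha> M \<theta>0 m) F \<le> \<rho> ^ m * F \<theta>0"
proof (induction m)
  case 0
  then show ?case by simp
next
  case (Suc m)
  let ?D = "td_svrg r \<gamma> \<phi> traj N \<alpha> M \<theta>0 m"
  have fin: "finite (set_pmf ?D)" using finite_set_pmf_td_svrg[OF N M] .
  have "measure_pmf.expectation (td_svrg r \<gamma> \<phi> traj N \<alpha> M \<theta>0 (Suc m)) F
      = measure_pmf.expectation ?D (\<lambda>\<theta>t. measure_pmf.expectation (epoch r \<gamma> \<phi> traj N \<alpha> M \<theta>t) F)"
    by (simp add: expectation_bind_pmf_finite fin finite_set_pmf_epoch[OF N M])
  also have "\<dots> \<le> measure_pmf.expectation ?D (\<lambda>\<theta>t. \<rho> * F \<theta>t)"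
    by (rule expectation_mono_finite_pmf[OF fin epoch])
  also have "\<dots> = \<rho> * measure_pmf.expectation ?D F"
    by simp
  also have "\<dots> \<le> \<rho> * (\<rho> ^ m * F \<theta>0)"
    using Suc.IH \<rho> by (rule mult_left_mono)
  finally show ?case by simp
qed

lemma min_eig_symmetric_part_A_d_le:
  fixes \<phi> :: "'s \<Rightarrow> real^'d"
  assumes "\<And>s. norm (\<phi> s) \<le> 1" "0 \<le> \<gamma>" "\<gamma> \<le> 1" "N \<ge> 1"
  shows "min_eig ((1/2) *\<^sub>R (A_d \<gamma> \<phi> traj N + transpose (A_d \<gamma> \<phi> traj N))) \<le> 2"
proof -
  obtain x :: "real^'d" where x: "norm x = 1" using norm_axis_1 by blast
  have "min_eig ((1/2) *\<^sub>R (A_d \<gamma> \<phi> traj N + transpose (A_d \<gamma> \<phi> traj N)))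
      \<le> norm x * norm (A_d \<gamma> \<phi> traj N *v x)"
    using min_eig_symmetric_part_le[of "A_d \<gamma> \<phi> traj N" x] x
      norm_cauchy_schwarz[of x "A_d \<gamma> \<phi> traj N *v x"] by simp
  also have "\<dots> \<le> 2" using norm_A_d_mult_vec_le[OF assms, where x = x] x by simp
  finally show ?thesis .
qed

lemma epoch_contraction:
  assumes phi: "\<And>s. norm (\<phi> s) \<le> 1" and gamma: "0 \<le> \<gamma>" "\<gamma> \<le> 1" and N: "N \<ge> 1"
    and fixed: "A_d \<gamma> \<phi> traj N *v \<theta>s = b_d r \<phi> traj N"
    and coercive: "\<And>x. L * (norm x)\<^sup>2 \<le> x \<bullet> (A_d \<gamma> \<phi> traj N *v x)"
    and L: "0 < L" "L \<le> 2" and M: "real M = 32 / L\<^sup>2"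
  shows "measure_pmf.expectation (epoch r \<gamma> \<phi> traj N (L / 32) M \<theta>t) (\<lambda>\<theta>. (norm (\<theta> - \<theta>s))\<^sup>2)
           \<le> (5/7) * (norm (\<theta>t - \<theta>s))\<^sup>2"
proof -
  define c where "c = 13 * L\<^sup>2 / 256"
  have "L\<^sup>2 \<le> 2\<^sup>2" using L by (intro power_mono) auto
  then have c: "0 < c" "c \<le> 1" using L by (simp_all add: c_def)
  have "real M > 0" using M L by simp
  then have M1: "M \<ge> 1" by simp
  have cM: "c * M = 13 / 8" using L by (simp add: M c_def)
  have step: "measure_pmf.expectation (pmf_of_set {1..N}) (\<lambda>i. (norm (svrg_step r \<gamma> \<phi> traj N (L / 32) \<theta>t \<theta> i - \<theta>s))\<^sup>2)
      \<le> (1 - c) * (norm (\<theta> - \<theta>s))\<^sup>2 + c * (2/13) * (norm (\<theta>t - \<theta>s))\<^sup>2" for \<theta>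
  proof -
    have coef: "1 - 2 * (L / 32) * L + 12 * (L / 32)\<^sup>2 = 1 - c" "8 * (L / 32)\<^sup>2 = c * (2/13)"
      by (simp_all add: c_def power2_eq_square)
    have "0 \<le> L / 32" using L by simp
    from svrg_step_mean_sq_error[OF phi gamma N fixed coercive this]
    show ?thesis unfolding coef .
  qed
  have "measure_pmf.expectation (epoch r \<gamma> \<phi> traj N (L / 32) M \<theta>t) (\<lambda>\<theta>. (norm (\<theta> - \<theta>s))\<^sup>2)
      \<le> (2/13 + (1 - 2/13) / (c * M)) * (norm (\<theta>t - \<theta>s))\<^sup>2"
    by (rule epoch_expectation_le[OF N M1 c _ _ step]) simp_all
  also have "\<dots> \<le> (5/7) * (norm (\<theta>t - \<theta>s))\<^sup>2"
    unfolding cM by (simp add: mult_right_mono)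
  finally show ?thesis .
qed

theorem proposition1:
  fixes r :: "'s::finite \<Rightarrow> 's \<Rightarrow> real"
    and \<phi> :: "'s \<Rightarrow> real^'d"
    and \<gamma> :: real
    and traj :: "nat \<Rightarrow> 's"
    and N M :: nat
    and \<theta>0 :: "real^'d"
    and m :: nat
  assumes phi_bound: "\<And>s. norm (\<phi> s) \<le> 1"
    and gamma: "0 \<le> \<gamma>" "\<gamma> < 1"
    and N_pos: "N \<ge> 1"
    and inv: "invertible (A_d \<gamma> \<phi> traj N)"
    and lam_pos: "min_eig ((1/2) *\<^sub>R (A_d \<gamma> \<phi> traj N + transpose (A_d \<gamma> \<phi> traj N))) > 0"
    and M_def: "real M = 32 / (min_eig ((1/2) *\<^sub>R (A_d \<gamma> \<phi> traj N + transpose (A_d \<gamma> \<phi> traj N))))\<^sup>2"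
  shows "measure_pmf.expectation
           (td_svrg r \<gamma> \<phi> traj N
              (min_eig ((1/2) *\<^sub>R (A_d \<gamma> \<phi> traj N + transpose (A_d \<gamma> \<phi> traj N))) / 32) M \<theta>0 m)
           (\<lambda>\<theta>. (norm (\<theta> - matrix_inv (A_d \<gamma> \<phi> traj N) *v b_d r \<phi> traj N))\<^sup>2)
         \<le> (5/7) ^ m * (norm (\<theta>0 - matrix_inv (A_d \<gamma> \<phi> traj N) *v b_d r \<phi> traj N))\<^sup>2"
proof -
  let ?A = "A_d \<gamma> \<phi> traj N"
  define L where "L = min_eig ((1/2) *\<^sub>R (?A + transpose ?A))"
  define \<theta>s where "\<theta>s = matrix_inv ?A *v b_d r \<phi> traj N"
  have gamma_le: "\<gamma> \<le> 1" using gamma by simp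
  have L: "0 < L" "L \<le> 2"
    using lam_pos min_eig_symmetric_part_A_d_le[OF phi_bound gamma(1) gamma_le N_pos]
    by (simp_all add: L_def)
  have M: "real M = 32 / L\<^sup>2" using M_def by (simp add: L_def)
  then have "real M > 0" using L by simp
  then have "M \<ge> 1" by simp
  have fixed: "?A *v \<theta>s = b_d r \<phi> traj N"
    unfolding \<theta>s_def matrix_vector_mul_assoc invertible_mult_matrix_inv[OF inv] by simp
  have coercive: "L * (norm x)\<^sup>2 \<le> x \<bullet> (?A *v x)" for x
    unfolding L_def by (rule min_eig_symmetric_part_le)
  have "measure_pmf.expectation (td_svrg r \<gamma> \<phi> traj N (L / 32) M \<theta>0 m) (\<lambda>\<theta>. (norm (\<theta> - \<theta>s))\<^sup>2)
      \<le> (5/7) ^ m * (norm (\<theta>0 - \<theta>s))\<^sup>2"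
    using epoch_contraction[OF phi_bound gamma(1) gamma_le N_pos fixed coercive L M]
    by (intro td_svrg_expectation_le[OF N_pos \<open>M \<ge> 1\<close>]) simp_all
  then show ?thesis unfolding L_def \<theta>s_def .
qed

end
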